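(* For integers $n\ge1$, $m\ge0$, $$\operatorname{Tr}(J_nB_n^{2m})=n\sum_{\pi\in\mathcal{D}_m}w(\pi),$$ where $\mathcal{D}_m$ is the set of Dyck paths of length $2m$ (lattice paths from height $0$ to height $0$ with $m$ up steps $(1,1)$ and $m$ down steps $(1,-1)$, never going below height $0$), and the weight $w(\pi)$ is the product of the weights of its steps: an up step from height $k-1$ to height $k$ has weight $a_{k-1}=\frac{n-k}{2k-1}$ and a down step from height $k$ to height $k-1$ has weight $b_k=\frac{n+k}{2k+1}$ ($k\ge1$). The empty path has weight $1$.
   Context: $J_n$ is the $n\times n$ all-ones matrix, and $B_n=i\,M$ where $M$ is the $n\times n$ matrix with zero diagonal, entries $1$ above and $-1$ below the diagonal. *)

theory Defs
  imports "Jordan_Normal_Form.Matrix" Complex_Main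
begin

definition J_mat :: "nat \<Rightarrow> complex mat" where
  "J_mat n = mat n n (\<lambda>_. 1)"

definition M_mat :: "nat \<Rightarrow> complex mat" where
  "M_mat n = mat n n (\<lambda>(i,j). if i < j then 1 else if j < i then -1 else 0)"

definition B_mat :: "nat \<Rightarrow> complex mat" where
  "B_mat n = \<i> \<cdot>\<^sub>m M_mat n"

definition mat_trace :: "'a::comm_monoid_add mat \<Rightarrow> 'a" where
  "mat_trace A = (\<Sum>i<dim_row A. A $$ (i,i))"

definition path_height :: "bool list \<Rightarrow> int" where
  "path_height p = (\<Sum>s\<leftarrow>p. if s then 1 else -1)"

definition dyck_paths :: "nat \<Rightarrow> bool list set" where
  "dyck_paths m = {p. length p = 2 * m \<and> length (filter id p) = m \<and>
                      (\<forall>k\<le>length p. path_height (take k p) \<ge> 0)}"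

text \<open>Step weights: up step from height k-1 to k has weight a_{k-1} = (n-k)/(2k-1);
  down step from height k to k-1 has weight b_k = (n+k)/(2k+1).\<close>
definition up_wt :: "nat \<Rightarrow> int \<Rightarrow> real" where
  "up_wt n k = (real n - real_of_int k) / (2 * real_of_int k - 1)"

definition down_wt :: "nat \<Rightarrow> int \<Rightarrow> real" where
  "down_wt n k = (real n + real_of_int k) / (2 * real_of_int k + 1)"

fun path_wt_from :: "nat \<Rightarrow> int \<Rightarrow> bool list \<Rightarrow> real" where
  "path_wt_from n h [] = 1"
| "path_wt_from n h (True # p) = up_wt n (h + 1) * path_wt_from n (h + 1) p"
| "path_wt_from n h (False # p) = down_wt n h * path_wt_from n (h - 1) p"

definition path_wt :: "nat \<Rightarrow> bool list \<Rightarrow> real" where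
  "path_wt n p = path_wt_from n 0 p"

end

theory Submission
  imports Defs
begin

(*
  The all-ones vector u_0 is the first of the vectors u_h = i^h (P_h(0), ..., P_h(n - 1)),
  where P_h is the discrete Chebyshev polynomial of degree h on {0, ..., n - 1}.  Since
  (M v)_k = sum v - v_k - 2 (v_0 + ... + v_(k-1)), expanding the P_h in the binomial basis
  turns B = i M into a tridiagonal operator on them: B u_h = a_h u_(h+1) + b_h u_(h-1), with
  u_(-1) = 0 and a_(n-1) = 0.  Moreover <u_0, u_h> = n for h = 0 and 0 otherwise.  Hence
  Tr (J B^N) = <u_0, B^N u_0> is n times the weighted sum over the nonnegative paths of
  length N from height 0 back to 0, which for N = 2m are the Dyck paths.
*)

section \<open>Nonnegative paths and their weights\<close>

lemma path_height_Nil [simp]: "path_height [] = 0"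
  by (simp add: path_height_def)

lemma path_height_Cons [simp]: "path_height (s # p) = (if s then 1 else -1) + path_height p"
  by (simp add: path_height_def)

lemma path_height_eq_count: "path_height p = 2 * int (length (filter id p)) - int (length p)"
  by (induction p) auto

lemma all_le_Suc_conv: "(\<forall>k\<le>Suc n. P k) \<longleftrightarrow> P 0 \<and> (\<forall>k\<le>n. P (Suc k))"
proof
  assume "P 0 \<and> (\<forall>k\<le>n. P (Suc k))"
  then show "\<forall>k\<le>Suc n. P k"
    by (metis Suc_le_mono not0_implies_Suc)
qed simp

lemma prefix_heights_Cons:
  "(\<forall>k\<le>Suc (length p). 0 \<le> h + path_height (take k (s # p))) \<longleftrightarrow>
     0 \<le> h \<and> (\<forall>k\<le>length p. 0 \<le> h + (if s then 1 else -1) + path_height (take k p))"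
  unfolding all_le_Suc_conv by (simp add: add.assoc)

definition return_paths :: "nat \<Rightarrow> int \<Rightarrow> bool list set" where
  "return_paths N h = {p. length p = N \<and> h + path_height p = 0 \<and>
                          (\<forall>k\<le>length p. 0 \<le> h + path_height (take k p))}"

lemma finite_return_paths: "finite (return_paths N h)"
proof (rule finite_subset)
  show "return_paths N h \<subseteq> {p. set p \<subseteq> UNIV \<and> length p = N}"
    by (auto simp: return_paths_def)
qed (rule finite_lists_length_eq, simp)

lemma return_paths_neg: "h < 0 \<Longrightarrow> return_paths N h = {}"
  by (auto simp: return_paths_def dest: spec[of _ 0])

lemma return_paths_0: "return_paths 0 h = (if h = 0 then {[]} else {})"
  by (auto simp: return_paths_def)

lemma Cons_in_return_paths:
  "0 \<le> h \<Longrightarrow> s # p \<in> return_paths (Suc N) h \<longleftrightarrow> p \<in> return_paths N (h + (if s then 1 else -1))"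
  by (simp add: return_paths_def prefix_heights_Cons add.assoc)

lemma return_paths_Suc:
  assumes "0 \<le> h"
  shows "return_paths (Suc N) h =
           Cons True ` return_paths N (h + 1) \<union> Cons False ` return_paths N (h - 1)"
proof (rule Set.set_eqI)
  fix p
  show "p \<in> return_paths (Suc N) h \<longleftrightarrow>
          p \<in> Cons True ` return_paths N (h + 1) \<union> Cons False ` return_paths N (h - 1)"
  proof (cases p)
    case (Cons s q)
    then show ?thesis
      using Cons_in_return_paths[OF assms] by (cases s) auto
  qed (auto simp: return_paths_def)
qed

lemma dyck_paths_eq_return_paths: "dyck_paths m = return_paths (2 * m) 0"
  by (auto simp: dyck_paths_def return_paths_def path_height_eq_count)

fun walk_weight :: "(int \<Rightarrow> 'a::monoid_mult) \<Rightarrow> (int \<Rightarrow> 'a) \<Rightarrow> int \<Rightarrow> bool list \<Rightarrow> 'a" where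
  "walk_weight up down h [] = 1"
| "walk_weight up down h (True # p) = up h * walk_weight up down (h + 1) p"
| "walk_weight up down h (False # p) = down h * walk_weight up down (h - 1) p"

lemma of_real_path_wt_from:
  "of_real (path_wt_from n h p) =
     walk_weight (\<lambda>k. of_real (up_wt n (k + 1))) (\<lambda>k. of_real (down_wt n k)) h p"
  by (induction n h p rule: path_wt_from.induct) simp_all

definition walk_sum :: "(int \<Rightarrow> 'a::comm_semiring_1) \<Rightarrow> (int \<Rightarrow> 'a) \<Rightarrow> nat \<Rightarrow> int \<Rightarrow> 'a" where
  "walk_sum up down N h = (\<Sum>p\<in>return_paths N h. walk_weight up down h p)"

lemma walk_sum_neg: "h < 0 \<Longrightarrow> walk_sum up down N h = 0"
  by (simp add: walk_sum_def return_paths_neg)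

lemma walk_sum_0: "walk_sum up down 0 h = (if h = 0 then 1 else 0)"
  by (simp add: walk_sum_def return_paths_0)

lemma walk_sum_Suc:
  assumes "0 \<le> h"
  shows "walk_sum up down (Suc N) h =
           up h * walk_sum up down N (h + 1) + down h * walk_sum up down N (h - 1)"
proof -
  have "walk_sum up down (Suc N) h =
          (\<Sum>p\<in>Cons True ` return_paths N (h + 1). walk_weight up down h p) +
          (\<Sum>p\<in>Cons False ` return_paths N (h - 1). walk_weight up down h p)"
    unfolding walk_sum_def return_paths_Suc[OF assms]
    by (rule sum.union_disjoint) (auto simp: finite_return_paths)
  then show ?thesis
    by (simp add: walk_sum_def sum.reindex sum_distrib_left)
qed

lemma scalar_prod_pow_mat_mult_vec_eq_walk_sum:
  fixes A :: "'a::field mat" and u :: "int \<Rightarrow> 'a vec"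
  assumes A: "A \<in> carrier_mat d d" and w: "w \<in> carrier_vec d"
    and u: "\<And>h. u h \<in> carrier_vec d"
    and u_neg: "\<And>h. h < 0 \<Longrightarrow> u h = 0\<^sub>v d"
    and A_u: "\<And>h. 0 \<le> h \<Longrightarrow> h < H \<Longrightarrow> A *\<^sub>v u h = up h \<cdot>\<^sub>v u (h + 1) + down h \<cdot>\<^sub>v u (h - 1)"
    and up_top: "up (H - 1) = 0"
    and w_u: "\<And>h. 0 \<le> h \<Longrightarrow> h < H \<Longrightarrow> w \<bullet> u h = (if h = 0 then c else 0)"
    and "h < H"
  shows "w \<bullet> (A ^\<^sub>m N *\<^sub>v u h) = c * walk_sum up down N h"
  using \<open>h < H\<close>
proof (induction N arbitrary: h)
  case 0
  have "A ^\<^sub>m 0 *\<^sub>v u h = u h"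
    using A u by simp
  then show ?case
    using w 0 by (cases "h < 0") (simp_all add: u_neg w_u walk_sum_0 walk_sum_neg)
next
  case (Suc N)
  have P: "A ^\<^sub>m N \<in> carrier_mat d d" using A by simp
  show ?case
  proof (cases "h < 0")
    case True
    have "A ^\<^sub>m Suc N *\<^sub>v 0\<^sub>v d = 0\<^sub>v d"
      using pow_carrier_mat[OF A, of "Suc N"] by (intro eq_vecI) (auto simp: scalar_prod_def)
    then show ?thesis using True w by (simp add: u_neg walk_sum_neg del: pow_mat.simps)
  next
    case False
    then have h: "0 \<le> h" by simp
    have "A ^\<^sub>m Suc N *\<^sub>v u h = A ^\<^sub>m N *\<^sub>v (A *\<^sub>v u h)"
      by (simp only: pow_mat.simps(2) assoc_mult_mat_vec[OF P A u])
    also have "\<dots> = up h \<cdot>\<^sub>v (A ^\<^sub>m N *\<^sub>v u (h + 1)) + down h \<cdot>\<^sub>v (A ^\<^sub>m N *\<^sub>v u (h - 1))"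
      unfolding A_u[OF h Suc.prems]
      using P u by (simp add: mult_add_distrib_mat_vec[OF P] mult_mat_vec[OF P])
    finally have "w \<bullet> (A ^\<^sub>m Suc N *\<^sub>v u h) =
        up h * (w \<bullet> (A ^\<^sub>m N *\<^sub>v u (h + 1))) + down h * (w \<bullet> (A ^\<^sub>m N *\<^sub>v u (h - 1)))"
      using P u w by (simp add: scalar_prod_add_distrib[of w d] del: pow_mat.simps)
    moreover have "up h * (w \<bullet> (A ^\<^sub>m N *\<^sub>v u (h + 1))) = c * (up h * walk_sum up down N (h + 1))"
    proof (cases "h + 1 < H")
      case False
      then have "h = H - 1" using Suc.prems by simp
      then show ?thesis using up_top by simp
    qed (simp add: Suc.IH)
    moreover have "w \<bullet> (A ^\<^sub>m N *\<^sub>v u (h - 1)) = c * walk_sum up down N (h - 1)"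
      using Suc.IH Suc.prems by simp
    ultimately show ?thesis
      by (simp add: walk_sum_Suc[OF h] algebra_simps)
  qed
qed

section \<open>Discrete Chebyshev polynomials\<close>

text \<open>
  \<open>cheb_poly n h i\<close> is the hypergeometric sum 3F2(-h, h+1, -i; 1, 1-n; 1), the discrete
  Chebyshev polynomial of degree \<open>h\<close> on \<open>{0..n-1}\<close> normalised to 1 at \<open>i = 0\<close>;
  \<open>hahn_num x j\<close> = (-x)_j (x+1)_j is the numerator of its coefficients.
\<close>

definition hahn_num :: "'a::comm_ring_1 \<Rightarrow> nat \<Rightarrow> 'a" where
  "hahn_num x j = pochhammer (- x) j * pochhammer (x + 1) j"

lemma hahn_num_0 [simp]: "hahn_num x 0 = 1"
  by (simp add: hahn_num_def)

lemma hahn_num_Suc: "hahn_num x (Suc j) = hahn_num x j * ((of_nat j - x) * (x + 1 + of_nat j))"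
  by (simp add: hahn_num_def pochhammer_rec' algebra_simps)

lemma hahn_num_Suc_eq_0: "x = 0 \<or> x = -1 \<Longrightarrow> hahn_num x (Suc j) = 0"
  by (auto simp: hahn_num_def pochhammer_0_left)

lemma hahn_num_reflect: "hahn_num (-1 - x) j = hahn_num x j"
proof -
  have "- (-1 - x) = x + 1" "-1 - x + 1 = - x" by simp_all
  then show ?thesis by (simp add: hahn_num_def mult.commute)
qed

lemma hahn_num_Suc_shift_up:
  "hahn_num (x + 1) (Suc j) = - hahn_num x j * ((x + 1 + of_nat j) * (x + 2 + of_nat j))"
proof -
  have "hahn_num (x + 1) (Suc j) = pochhammer (- (x + 1)) (Suc j) * pochhammer (x + 2) (Suc j)"
    by (simp add: hahn_num_def add.assoc)
  also have "\<dots> = - pochhammer (- x) j * ((x + 1) * pochhammer (x + 2) (Suc j))"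
    by (simp add: pochhammer_rec algebra_simps)
  also have "(x + 1) * pochhammer (x + 2) (Suc j) = pochhammer (x + 1) (Suc (Suc j))"
    by (simp add: pochhammer_rec add.assoc)
  also have "\<dots> = pochhammer (x + 1) j * ((x + 1 + of_nat j) * (x + 2 + of_nat j))"
    by (simp add: pochhammer_rec' algebra_simps)
  finally show ?thesis
    by (simp add: hahn_num_def mult_ac)
qed

lemma hahn_num_Suc_shift_down:
  "hahn_num (x - 1) (Suc j) = - hahn_num x j * ((of_nat j - x) * (of_nat j + 1 - x))"
proof -
  have "hahn_num (x - 1) (Suc j) = hahn_num ((-1 - x) + 1) (Suc j)"
    using hahn_num_reflect[of "x - 1"] by simp
  also have "\<dots> = - hahn_num (-1 - x) j * (((-1 - x) + 1 + of_nat j) * ((-1 - x) + 2 + of_nat j))"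
    by (rule hahn_num_Suc_shift_up)
  also have "\<dots> = - hahn_num x j * ((of_nat j - x) * (of_nat j + 1 - x))"
    by (simp add: hahn_num_reflect algebra_simps)
  finally show ?thesis .
qed

lemma hahn_num_three_term:
  "(2 * x + 1) * (hahn_num x (Suc j) + 2 * (of_nat j + 1) * (m - of_nat j) * hahn_num x j) =
     (m + 1 + x) * hahn_num (x - 1) (Suc j) - (m - x) * hahn_num (x + 1) (Suc j)"
  unfolding hahn_num_Suc_shift_up hahn_num_Suc_shift_down
  unfolding hahn_num_Suc
  by (simp add: algebra_simps)

lemma hahn_num_telescope:
  fixes x :: "'a::field_char_0"
  shows "x * (x + 1) * (\<Sum>j<N. hahn_num x j / (fact j * fact (Suc j))) =
           - of_nat N * hahn_num x N / fact N ^ 2"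
proof (induction N)
  case (Suc N)
  define q where "q = hahn_num x N"
  define f :: 'a where "f = fact N"
  define r :: 'a where "r = of_nat N + 1"
  have f: "f \<noteq> 0" by (simp add: f_def)
  have r: "r \<noteq> 0"
    unfolding r_def by (metis of_nat_Suc of_nat_neq_0 add.commute)
  have fact_Suc_N: "fact (Suc N) = r * f" by (simp add: f_def r_def)
  have "x * (x + 1) * (\<Sum>j<Suc N. hahn_num x j / (fact j * fact (Suc j))) =
          x * (x + 1) * (\<Sum>j<N. hahn_num x j / (fact j * fact (Suc j))) + x * (x + 1) * q / (f * (r * f))"
    by (simp add: q_def f_def r_def algebra_simps)
  also have "\<dots> = - of_nat N * q / f ^ 2 + x * (x + 1) * q / (f * (r * f))"
    by (simp only: Suc.IH q_def f_def)
  also have "\<dots> = q * (x * (x + 1) - of_nat N * r) / (r * f ^ 2)"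
    using f r by (simp add: field_simps power2_eq_square)
  also have "x * (x + 1) - of_nat N * r = (x - of_nat N) * (x + 1 + of_nat N)"
    by (simp add: r_def algebra_simps)
  also have "q * \<dots> / (r * f ^ 2) = - of_nat (Suc N) * hahn_num x (Suc N) / fact (Suc N) ^ 2"
  proof -
    have Suc_N: "of_nat (Suc N) = r" by (simp add: r_def)
    show ?thesis
      using f r unfolding Suc_N fact_Suc_N hahn_num_Suc q_def[symmetric]
      by (simp add: field_simps power2_eq_square)
  qed
  finally show ?case .
qed simp

definition cheb_coeff :: "nat \<Rightarrow> int \<Rightarrow> nat \<Rightarrow> real" where
  "cheb_coeff n h j = hahn_num (of_int h) j / (fact j ^ 2 * of_nat ((n - 1) choose j))"

definition cheb_poly :: "nat \<Rightarrow> int \<Rightarrow> nat \<Rightarrow> real" where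
  "cheb_poly n h i = (\<Sum>j<n. cheb_coeff n h j * of_nat (i choose j))"

lemma cheb_coeff_0 [simp]: "cheb_coeff n h 0 = 1"
  by (simp add: cheb_coeff_def)

lemma two_of_int_plus_one_neq_0: "2 * real_of_int h + 1 \<noteq> 0"
proof -
  have "2 * h + 1 \<noteq> 0" by presburger
  then show ?thesis by (metis of_int_1 of_int_add of_int_eq_0_iff of_int_mult of_int_numeral)
qed

lemma down_wt_minus_up_wt: "down_wt n h - up_wt n (h + 1) = 1"
  using two_of_int_plus_one_neq_0[of h]
  by (simp add: down_wt_def up_wt_def diff_divide_distrib[symmetric] algebra_simps)

lemma binomial_Suc_ratio:
  assumes "Suc j < n"
  shows "(of_nat j + 1) * real ((n - 1) choose Suc j) = (real n - 1 - of_nat j) * real ((n - 1) choose j)"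
proof -
  have "Suc j * ((n - 1) choose Suc j) = (n - 1 - j) * ((n - 1) choose j)"
    by (metis binomial_absorption binomial_absorb_comp)
  then have "real (Suc j) * real ((n - 1) choose Suc j) = real (n - 1 - j) * real ((n - 1) choose j)"
    by (metis of_nat_mult)
  moreover have "real (n - 1 - j) = real n - 1 - of_nat j"
    using assms by (simp add: of_nat_diff)
  ultimately show ?thesis by (simp add: algebra_simps)
qed

lemma cheb_coeff_Suc:
  assumes "Suc j < n"
  shows "cheb_coeff n h (Suc j) =
           hahn_num (of_int h) (Suc j) /
             (fact j ^ 2 * real ((n - 1) choose j) * ((of_nat j + 1) * (real n - 1 - of_nat j)))"
proof -
  have "fact (Suc j) ^ 2 * real ((n - 1) choose Suc j) =
          fact j ^ 2 * (of_nat j + 1) * ((of_nat j + 1) * real ((n - 1) choose Suc j))"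
    by (simp add: fact_Suc power2_eq_square algebra_simps)
  also have "\<dots> = fact j ^ 2 * real ((n - 1) choose j) * ((of_nat j + 1) * (real n - 1 - of_nat j))"
    unfolding binomial_Suc_ratio[OF assms] by (simp add: ac_simps)
  finally show ?thesis by (simp add: cheb_coeff_def)
qed

lemma cheb_coeff_three_term:
  assumes "Suc j < n"
  shows "cheb_coeff n h (Suc j) + 2 * cheb_coeff n h j =
           down_wt n h * cheb_coeff n (h - 1) (Suc j) - up_wt n (h + 1) * cheb_coeff n (h + 1) (Suc j)"
proof -
  define x where "x = real_of_int h"
  define D where "D = fact j ^ 2 * real ((n - 1) choose j)"
  define e where "e = (of_nat j + 1) * (real n - 1 - of_nat j)"
  have x: "2 * x + 1 \<noteq> 0" unfolding x_def by (rule two_of_int_plus_one_neq_0)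
  have D: "D \<noteq> 0" using assms by (simp add: D_def)
  have e: "e \<noteq> 0" using assms by (auto simp: e_def)
  have c: "cheb_coeff n g (Suc j) = hahn_num (of_int g) (Suc j) / (D * e)" for g
    unfolding cheb_coeff_Suc[OF assms] D_def e_def ..
  have c0: "cheb_coeff n h j = hahn_num x j / D"
    by (simp only: cheb_coeff_def D_def x_def)
  have c_h: "cheb_coeff n h (Suc j) = hahn_num x (Suc j) / (D * e)"
    by (simp only: c x_def)
  have c_down: "cheb_coeff n (h - 1) (Suc j) = hahn_num (x - 1) (Suc j) / (D * e)"
    by (simp add: c x_def)
  have c_up: "cheb_coeff n (h + 1) (Suc j) = hahn_num (x + 1) (Suc j) / (D * e)"
    by (simp add: c x_def)
  have up: "up_wt n (h + 1) = (real n - x - 1) / (2 * x + 1)"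
    by (simp add: up_wt_def x_def algebra_simps)
  have down: "down_wt n h = (real n + x) / (2 * x + 1)"
    by (simp add: down_wt_def x_def)
  have "cheb_coeff n h (Suc j) + 2 * cheb_coeff n h j = (hahn_num x (Suc j) + 2 * e * hahn_num x j) / (D * e)"
    unfolding c0 c_h using D e by (simp add: field_simps)
  also have "\<dots> = (2 * x + 1) * (hahn_num x (Suc j) + 2 * e * hahn_num x j) / ((2 * x + 1) * (D * e))"
    using x by (rule mult_divide_mult_cancel_left[symmetric])
  also have "(2 * x + 1) * (hahn_num x (Suc j) + 2 * e * hahn_num x j) =
               (real n + x) * hahn_num (x - 1) (Suc j) - (real n - x - 1) * hahn_num (x + 1) (Suc j)"
    using hahn_num_three_term[of x j "real n - 1"] by (simp add: e_def algebra_simps)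
  also have "\<dots> / ((2 * x + 1) * (D * e)) =
               down_wt n h * cheb_coeff n (h - 1) (Suc j) - up_wt n (h + 1) * cheb_coeff n (h + 1) (Suc j)"
    unfolding c_down c_up up down times_divide_times_eq by (rule diff_divide_distrib)
  finally show ?thesis .
qed

lemma cheb_poly_eq_Suc:
  "cheb_poly (Suc n) h i = 1 + (\<Sum>j<n. cheb_coeff (Suc n) h (Suc j) * of_nat (i choose Suc j))"
  unfolding cheb_poly_def sum.lessThan_Suc_shift by simp

lemma cheb_poly_trivial: "0 < n \<Longrightarrow> h = 0 \<or> h = -1 \<Longrightarrow> cheb_poly n h i = 1"
  by (cases n) (auto simp: cheb_poly_eq_Suc cheb_coeff_def hahn_num_Suc_eq_0)

lemma sum_lessThan_binomial: "(\<Sum>k<i. k choose j) = i choose Suc j"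
  by (cases i) (simp_all add: lessThan_Suc_atMost sum_choose_upper)

lemma sum_cheb_poly_lessThan:
  "(\<Sum>k<i. cheb_poly n h k) = (\<Sum>j<n. cheb_coeff n h j * of_nat (i choose Suc j))"
proof -
  have "(\<Sum>k<i. cheb_poly n h k) = (\<Sum>j<n. \<Sum>k<i. cheb_coeff n h j * of_nat (k choose j))"
    unfolding cheb_poly_def by (rule sum.swap)
  also have "\<dots> = (\<Sum>j<n. cheb_coeff n h j * of_nat (\<Sum>k<i. k choose j))"
    by (simp add: sum_distrib_left)
  finally show ?thesis by (simp only: sum_lessThan_binomial)
qed

lemma cheb_poly_partial_sum:
  assumes "i < n"
  shows "cheb_poly n h i + 2 * (\<Sum>k<i. cheb_poly n h k) =
           down_wt n h * cheb_poly n (h - 1) i - up_wt n (h + 1) * cheb_poly n (h + 1) i"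
proof -
  obtain n' where n: "n = Suc n'" using assms by (cases n) auto
  have "(\<Sum>k<i. cheb_poly n h k) = (\<Sum>j<n'. cheb_coeff n h j * of_nat (i choose Suc j))"
    using assms by (simp add: sum_cheb_poly_lessThan n)
  then have "cheb_poly n h i + 2 * (\<Sum>k<i. cheb_poly n h k) =
      1 + (\<Sum>j<n'. (cheb_coeff n h (Suc j) + 2 * cheb_coeff n h j) * of_nat (i choose Suc j))"
    by (simp add: n cheb_poly_eq_Suc sum.distrib sum_distrib_left algebra_simps)
  also have "\<dots> = 1 + (\<Sum>j<n'. (down_wt n h * cheb_coeff n (h - 1) (Suc j) -
                      up_wt n (h + 1) * cheb_coeff n (h + 1) (Suc j)) * of_nat (i choose Suc j))"
    using cheb_coeff_three_term n by simp
  also have "\<dots> = down_wt n h * cheb_poly n (h - 1) i - up_wt n (h + 1) * cheb_poly n (h + 1) i"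
    using down_wt_minus_up_wt[of n h]
    by (simp add: n cheb_poly_eq_Suc sum_subtractf sum_distrib_left algebra_simps)
  finally show ?thesis .
qed

lemma sum_cheb_poly_eq_0:
  assumes "1 \<le> h" "h < int n"
  shows "(\<Sum>i<n. cheb_poly n h i) = 0"
proof -
  define x where "x = real_of_int h"
  have "cheb_coeff n h j * of_nat (n choose Suc j) = of_nat n * (hahn_num x j / (fact j * fact (Suc j)))"
    if "j < n" for j
  proof -
    define r :: real where "r = of_nat j + 1"
    have r: "r \<noteq> 0" by (simp add: r_def)
    have fact_Suc_j: "fact (Suc j) = r * fact j" by (simp add: r_def)
    have "real (Suc j * (n choose Suc j)) = real (n * ((n - 1) choose j))"
      by (simp only: binomial_absorption)
    then have "r * real (n choose Suc j) = real n * real ((n - 1) choose j)"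
      by (simp add: r_def algebra_simps)
    then have binomial_eq: "real (n choose Suc j) = real n * real ((n - 1) choose j) / r"
      using r by (simp add: field_simps)
    show ?thesis
      using that r
      by (simp add: binomial_eq fact_Suc_j cheb_coeff_def x_def field_simps power2_eq_square del: fact_Suc)
  qed
  then have "(\<Sum>i<n. cheb_poly n h i) = of_nat n * (\<Sum>j<n. hahn_num x j / (fact j * fact (Suc j)))"
    by (simp add: sum_cheb_poly_lessThan sum_distrib_left)
  moreover have "hahn_num x n = 0"
  proof -
    have "nat h < n" using assms by arith
    then have "pochhammer (- real (nat h)) n = 0" by (simp only: pochhammer_of_nat_eq_0_iff)
    then show ?thesis using assms by (simp add: hahn_num_def x_def)
  qed
  moreover have "x * (x + 1) \<noteq> 0"
    using assms by (simp add: x_def)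
  ultimately show ?thesis
    using hahn_num_telescope[of x n] by simp
qed

section \<open>The tridiagonal action of \<open>B_mat\<close>\<close>

text \<open>The factor i^h absorbs the factor i of \<open>B_mat n = \<i> \<cdot>\<^sub>m M_mat n\<close>, as i^(h+1) = - i^(h-1).\<close>

definition cheb_vec :: "nat \<Rightarrow> int \<Rightarrow> complex vec" where
  "cheb_vec n h = (if h < 0 then 0\<^sub>v n else vec n (\<lambda>i. \<i> ^ nat h * of_real (cheb_poly n h i)))"

lemma dim_cheb_vec [simp]: "dim_vec (cheb_vec n h) = n"
  by (simp add: cheb_vec_def)

lemma cheb_vec_carrier [simp]: "cheb_vec n h \<in> carrier_vec n"
  by (rule carrier_vecI) simp

lemma cheb_vec_neg: "h < 0 \<Longrightarrow> cheb_vec n h = 0\<^sub>v n"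
  by (simp add: cheb_vec_def)

lemma cheb_vec_0:
  assumes "0 < n"
  shows "cheb_vec n 0 = vec n (\<lambda>_. 1)"
proof (rule eq_vecI)
  fix i assume "i < dim_vec (vec n (\<lambda>_. 1 :: complex))"
  then show "cheb_vec n 0 $ i = vec n (\<lambda>_. 1) $ i"
    using cheb_poly_trivial[OF assms, of 0] by (simp add: cheb_vec_def)
qed simp

lemma B_mat_carrier [simp]: "B_mat n \<in> carrier_mat n n"
  by (simp add: B_mat_def M_mat_def)

lemma B_mat_mult_vec_index:
  fixes v :: "complex vec"
  assumes "v \<in> carrier_vec n" "i < n"
  shows "(B_mat n *\<^sub>v v) $ i = \<i> * ((\<Sum>k<n. v $ k) - (v $ i + 2 * (\<Sum>k<i. v $ k)))"
proof -
  have "(B_mat n *\<^sub>v v) $ i = \<i> * (\<Sum>k<n. (if i < k then 1 else if k < i then -1 else 0) * v $ k)"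
    using assms by (simp add: B_mat_def M_mat_def scalar_prod_def lessThan_atLeast0 sum_distrib_left mult.assoc)
  also have "(\<Sum>k<n. (if i < k then 1 else if k < i then -1 else 0) * v $ k) =
               (\<Sum>k<n. v $ k - (if k = i then v $ k else 0) - 2 * (if k < i then v $ k else 0))"
    by (intro sum.cong) auto
  also have "\<dots> = (\<Sum>k<n. v $ k) - (v $ i + 2 * (\<Sum>k<i. v $ k))"
  proof -
    have "(\<Sum>k<n. if k < i then v $ k else 0) = (\<Sum>k<i. v $ k)"
      using assms(2) by (intro sum.mono_neutral_cong_right) auto
    then show ?thesis
      using assms(2) by (simp add: sum_subtractf sum_distrib_left[symmetric])
  qed
  finally show ?thesis .
qed

lemma B_mat_mult_cheb_vec:
  assumes "0 \<le> h" "h < int n"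
  shows "B_mat n *\<^sub>v cheb_vec n h =
           of_real (up_wt n (h + 1)) \<cdot>\<^sub>v cheb_vec n (h + 1) + of_real (down_wt n h) \<cdot>\<^sub>v cheb_vec n (h - 1)"
proof (rule eq_vecI)
  fix i assume "i < dim_vec (of_real (up_wt n (h + 1)) \<cdot>\<^sub>v cheb_vec n (h + 1) +
                               of_real (down_wt n h) \<cdot>\<^sub>v cheb_vec n (h - 1))"
  then have i: "i < n" by simp
  obtain k where k: "h = int k" using assms(1) nonneg_eq_int by blast
  define a where "a = up_wt n (h + 1)"
  define b where "b = down_wt n h"
  define S where "S = (\<Sum>l<n. cheb_poly n h l)"
  have "(B_mat n *\<^sub>v cheb_vec n h) $ i =
          \<i> ^ Suc k * of_real (S - (cheb_poly n h i + 2 * (\<Sum>l<i. cheb_poly n h l)))"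
    unfolding B_mat_mult_vec_index[OF cheb_vec_carrier i]
    using i by (simp add: cheb_vec_def k S_def sum_distrib_left algebra_simps)
  also have "\<dots> = \<i> ^ Suc k * of_real (S - b * cheb_poly n (h - 1) i + a * cheb_poly n (h + 1) i)"
    by (simp add: cheb_poly_partial_sum[OF i] a_def b_def algebra_simps)
  also have "\<dots> = (of_real a \<cdot>\<^sub>v cheb_vec n (h + 1) + of_real b \<cdot>\<^sub>v cheb_vec n (h - 1)) $ i"
  proof (cases k)
    case 0
    have "S = real n" "b = real n" "cheb_poly n (h - 1) i = 1"
      using i by (simp_all add: S_def b_def down_wt_def k 0 cheb_poly_trivial)
    then show ?thesis using i by (simp add: cheb_vec_def k 0)
  next
    case (Suc k')
    have "S = 0" using assms by (simp add: S_def k Suc sum_cheb_poly_eq_0)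
    moreover have "\<i> ^ Suc k = - (\<i> ^ k')" by (simp add: Suc)
    moreover have "nat (h + 1) = Suc k" "nat (h - 1) = k'" using k Suc by auto
    ultimately show ?thesis using i k Suc by (simp add: cheb_vec_def algebra_simps)
  qed
  finally show "(B_mat n *\<^sub>v cheb_vec n h) $ i =
      (of_real (up_wt n (h + 1)) \<cdot>\<^sub>v cheb_vec n (h + 1) + of_real (down_wt n h) \<cdot>\<^sub>v cheb_vec n (h - 1)) $ i"
    by (simp only: a_def b_def)
qed (simp add: B_mat_def M_mat_def)

lemma scalar_prod_cheb_vec_0:
  assumes "0 \<le> h" "h < int n"
  shows "cheb_vec n 0 \<bullet> cheb_vec n h = (if h = 0 then of_nat n else 0)"
proof -
  have n: "0 < n" using assms by simp
  have "cheb_vec n 0 \<bullet> cheb_vec n h = \<i> ^ nat h * of_real (\<Sum>i<n. cheb_poly n h i)"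
    using assms unfolding cheb_vec_0[OF n]
    by (simp add: cheb_vec_def scalar_prod_def lessThan_atLeast0 sum_distrib_left)
  also have "(\<Sum>i<n. cheb_poly n h i) = (if h = 0 then real n else 0)"
    using assms n by (auto simp: cheb_poly_trivial sum_cheb_poly_eq_0)
  finally show ?thesis by simp
qed

lemma mat_trace_J_mat_mult:
  assumes "A \<in> carrier_mat n n"
  shows "mat_trace (J_mat n * A) = vec n (\<lambda>_. 1) \<bullet> (A *\<^sub>v vec n (\<lambda>_. 1))"
proof -
  have "mat_trace (J_mat n * A) = (\<Sum>i<n. \<Sum>k<n. A $$ (k, i))"
    using assms by (simp add: mat_trace_def J_mat_def scalar_prod_def lessThan_atLeast0)
  also have "\<dots> = (\<Sum>k<n. \<Sum>i<n. A $$ (k, i))"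
    by (rule sum.swap)
  also have "\<dots> = vec n (\<lambda>_. 1) \<bullet> (A *\<^sub>v vec n (\<lambda>_. 1))"
    using assms by (simp add: scalar_prod_def lessThan_atLeast0)
  finally show ?thesis .
qed

lemma scalar_prod_B_mat_pow_eq_walk_sum:
  assumes "0 < n"
  shows "cheb_vec n 0 \<bullet> (B_mat n ^\<^sub>m N *\<^sub>v cheb_vec n 0) =
           of_nat n * walk_sum (\<lambda>k. of_real (up_wt n (k + 1))) (\<lambda>k. of_real (down_wt n k)) N 0"
proof (rule scalar_prod_pow_mat_mult_vec_eq_walk_sum[where d = n and u = "cheb_vec n" and H = "int n"])
  show "B_mat n *\<^sub>v cheb_vec n h =
          of_real (up_wt n (h + 1)) \<cdot>\<^sub>v cheb_vec n (h + 1) + of_real (down_wt n h) \<cdot>\<^sub>v cheb_vec n (h - 1)"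
    if "0 \<le> h" "h < int n" for h
    by (rule B_mat_mult_cheb_vec[OF that])
  show "cheb_vec n 0 \<bullet> cheb_vec n h = (if h = 0 then of_nat n else 0)"
    if "0 \<le> h" "h < int n" for h
    by (rule scalar_prod_cheb_vec_0[OF that])
  show "complex_of_real (up_wt n (int n - 1 + 1)) = 0"
    by (simp add: up_wt_def)
qed (simp_all add: cheb_vec_neg assms)

theorem theorem5p2:
  fixes n m :: nat
  assumes "n \<ge> 1"
  shows "mat_trace (J_mat n * B_mat n ^\<^sub>m (2 * m))
           = complex_of_real (real n * (\<Sum>p\<in>dyck_paths m. path_wt n p))"
proof -
  have n: "0 < n" using assms by simp
  have "mat_trace (J_mat n * B_mat n ^\<^sub>m (2 * m)) =
          cheb_vec n 0 \<bullet> (B_mat n ^\<^sub>m (2 * m) *\<^sub>v cheb_vec n 0)"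
    unfolding cheb_vec_0[OF n] by (rule mat_trace_J_mat_mult) simp
  also have "\<dots> = of_nat n * walk_sum (\<lambda>k. of_real (up_wt n (k + 1))) (\<lambda>k. of_real (down_wt n k)) (2 * m) 0"
    by (rule scalar_prod_B_mat_pow_eq_walk_sum[OF n])
  also have "walk_sum (\<lambda>k. of_real (up_wt n (k + 1))) (\<lambda>k. of_real (down_wt n k)) (2 * m) 0 =
               complex_of_real (\<Sum>p\<in>dyck_paths m. path_wt n p)"
    by (simp add: walk_sum_def dyck_paths_eq_return_paths path_wt_def of_real_path_wt_from)
  finally show ?thesis by simp
qed

end
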